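(* Let $n\in\mathbb N$ and let $\rho:\mathbb H^n\to\mathbb R$ be a $C^2$-function (in the real coordinates) for which there is a constant $\epsilon_0>0$ such that $$\sum_{l,m=1}^{4n}\frac{\partial^2\rho(z)}{\partial x_l\,\partial x_m}\,t_lt_m\ \ge\ \epsilon_0|t|^2\qquad\text{for all } z\in\mathbb H^n,\ t\in\mathbb R^{4n},$$ and let $U:=\{z\in\mathbb H^n:\rho(z)<0\}$. Define $v_\rho:\mathbb H^n\to\mathbb H^n$ by $v_\rho(z):=(\,{}^1v(z),\dots,{}^nv(z))$ with ${}^lv(z):=\sum_{m=1}^4\frac{\partial\rho(z)}{\partial x_{4(l-1)+m}}\,S_m$. Then $v_\rho$ is a quaternion boundary distinguishing map for $U$: it is a $C^1$ map and $$\langle v_\rho(\zeta);\zeta-z\rangle\neq 0\qquad\text{for all }\zeta\in\partial U,\ z\in U .$$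
   Context: $\mathbb H$ denotes the quaternions with real basis $S_1=e$ (the unit), $S_2=i$, $S_3=j$, $S_4=k$, $i^2=j^2=k^2=-e$, $ij=-ji=k$; for $a=a_1e+a_2i+a_3j+a_4k$ its conjugate is $\tilde a=a_1e-a_2i-a_3j-a_4k$. A point $z\in\mathbb H^n$ is written $z=({}^1z,\dots,{}^nz)$ with ${}^lz=\sum_{m=1}^4 x_{4(l-1)+m}S_m$, $x_r\in\mathbb R$, and $|t|$ is the Euclidean norm on $\mathbb R^{4n}$. The scalar product is $\langle\zeta;z\rangle:=\sum_{l=1}^n {}^l\tilde\zeta\,{}^lz\in\mathbb H$. (In the paper's notation, ${}^lv=\sum_m (\partial\rho/\partial\,{}^lz).S_m\,S_m$, where $(\partial\rho/\partial\,{}^lz).S_m$ is the derivative of $\rho$ in the direction $S_m$ of the $l$-th quaternion coordinate.) A quaternion boundary distinguishing map for a bounded open set $U\subset\mathbb H^n$ is a quaternion-valued $C^1$ map $\psi(\zeta,z)$ defined on $V\times U$, $V$ a neighbourhood of $\partial U$, with $\langle\psi(\zeta,z);\zeta-z\rangle\neq0$ for all $(\zeta,z)\in\partial U\times U$; here $\psi(\zeta,z)=v_\rho(\zeta)$. *)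

theory Defs
  imports "HOL-Analysis.Analysis"
begin

text \<open>Quaternions are represented as real 4-vectors a = a1 e + a2 i + a3 j + a4 k,
  with components a$1, a$2, a$3, a$4 (indices of the numeral type 4).
  H^n is represented as real^4^'n, with z$l$m the real coordinate x_{4(l-1)+m}.\<close>

type_synonym quat = "real^4"
type_synonym 'n hq = "quat^'n"

definition qS :: "4 \<Rightarrow> quat" where
  "qS m = axis m 1"   \<comment> \<open>S_1 = e, S_2 = i, S_3 = j, S_4 = k\<close>

definition qmult :: "quat \<Rightarrow> quat \<Rightarrow> quat" where
  "qmult a b = vector
     [a$1*b$1 - a$2*b$2 - a$3*b$3 - a$4*b$4,
      a$1*b$2 + a$2*b$1 + a$3*b$4 - a$4*b$3,
      a$1*b$3 - a$2*b$4 + a$3*b$1 + a$4*b$2,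
      a$1*b$4 + a$2*b$3 - a$3*b$2 + a$4*b$1]"

definition qconj :: "quat \<Rightarrow> quat" where
  "qconj a = vector [a$1, - a$2, - a$3, - a$4]"

definition qinner :: "quat^('n::finite) \<Rightarrow> quat^'n \<Rightarrow> quat" where
  "qinner \<zeta> z = (\<Sum>l\<in>UNIV. qmult (qconj (\<zeta>$l)) (z$l))"

definition qe :: "('n::finite) \<Rightarrow> 4 \<Rightarrow> quat^'n" where
  "qe l m = axis l (axis m 1)"

definition pd :: "('a::real_normed_vector \<Rightarrow> 'b::real_normed_vector) \<Rightarrow> 'a \<Rightarrow> 'a \<Rightarrow> 'b" where
  "pd f b x = vector_derivative (\<lambda>s. f (x + s *\<^sub>R b)) (at 0)"

definition C1_on :: "'a::euclidean_space set \<Rightarrow> ('a \<Rightarrow> 'b::real_normed_vector) \<Rightarrow> bool" where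
  "C1_on S f \<longleftrightarrow>
     (\<forall>b\<in>Basis. (\<forall>x\<in>S. (\<lambda>s. f (x + s *\<^sub>R b)) differentiable (at 0))
                 \<and> continuous_on S (pd f b))"

definition C2_on :: "'a::euclidean_space set \<Rightarrow> ('a \<Rightarrow> 'b::real_normed_vector) \<Rightarrow> bool" where
  "C2_on S f \<longleftrightarrow> C1_on S f \<and> (\<forall>b\<in>Basis. C1_on S (pd f b))"

definition vrho :: "(quat^('n::finite) \<Rightarrow> real) \<Rightarrow> quat^'n \<Rightarrow> quat^'n" where
  "vrho \<rho> z = (\<chi> l. \<Sum>m\<in>UNIV. pd \<rho> (qe l m) z *\<^sub>R qS m)"

definition qbd_map :: "('n::finite) hq set \<Rightarrow> ('n hq \<times> 'n hq \<Rightarrow> 'n hq) \<Rightarrow> bool" where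
  "qbd_map U \<psi> \<longleftrightarrow> bounded U \<and> open U \<and>
     (\<exists>V. open V \<and> frontier U \<subseteq> V \<and> C1_on (V \<times> U) \<psi>) \<and>
     (\<forall>\<zeta>\<in>frontier U. \<forall>z\<in>U. qinner (\<psi> (\<zeta>, z)) (\<zeta> - z) \<noteq> 0)"

end

theory Submission
  imports Defs
begin

text \<open>Taylor's formula along the segment from x to x + d, with the Hessian bounded below by
  \<open>\<epsilon>\<^sub>0\<close>, gives \<open>\<rho> (x + d) \<ge> \<rho> x + d \<bullet> \<nabla>\<rho>(x) + \<epsilon>\<^sub>0 |d|\<^sup>2 / 2\<close>; continuity of the partials
  is what makes \<open>\<rho>\<close> and its partials Frechet differentiable, so that the chain rule applies.
  The map \<open>v\<^sub>\<rho>\<close> is the Euclidean gradient, and the real part of the quaternion scalar product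
  is the Euclidean inner product, so the real part of \<open>\<langle>v\<^sub>\<rho>(\<zeta>); \<zeta> - z\<rangle>\<close> is at least
  \<open>\<rho>(\<zeta>) - \<rho>(z) > 0\<close> for \<open>\<zeta>\<close> on the boundary and z in U. The same inequality at x = 0 shows
  that \<open>\<rho>\<close> grows quadratically, so U is bounded; \<open>v\<^sub>\<rho>\<close> is \<open>C\<^sup>1\<close> because \<open>\<rho>\<close> is \<open>C\<^sup>2\<close>.\<close>

lemma mean_value_along_line:
  fixes f :: "'a::real_normed_vector \<Rightarrow> real"
  assumes D: "\<And>y. ((\<lambda>s. f (y + s *\<^sub>R c)) has_real_derivative D y) (at 0)"
  shows "\<exists>\<theta>. \<bar>\<theta>\<bar> \<le> \<bar>t\<bar> \<and> f (p + t *\<^sub>R c) - f p = t * D (p + \<theta> *\<^sub>R c)"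
proof -
  have der: "((\<lambda>s. f (p + s *\<^sub>R c)) has_real_derivative D (p + s *\<^sub>R c)) (at s)" for s
  proof -
    have "(\<lambda>u. f ((p + s *\<^sub>R c) + u *\<^sub>R c)) = (\<lambda>u. f (p + (u + s) *\<^sub>R c))"
      by (simp add: scaleR_add_left add_ac)
    then show ?thesis
      using D[of "p + s *\<^sub>R c"] DERIV_shift[of "\<lambda>s. f (p + s *\<^sub>R c)" _ 0 s] by simp
  qed
  consider "t = 0" | "t > 0" | "t < 0" by linarith
  then show ?thesis
  proof cases
    case 1
    then show ?thesis by (intro exI[of _ 0]) simp
  next
    case 2
    with MVT2[OF 2, of "\<lambda>s. f (p + s *\<^sub>R c)"] der obtain \<theta> where
      "0 < \<theta>" "\<theta> < t" "f (p + t *\<^sub>R c) - f p = t * D (p + \<theta> *\<^sub>R c)"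
      by fastforce
    then show ?thesis by (intro exI[of _ \<theta>]) auto
  next
    case 3
    with MVT2[OF 3, of "\<lambda>s. f (p + s *\<^sub>R c)"] der obtain \<theta> where
      "t < \<theta>" "\<theta> < 0" "f p - f (p + t *\<^sub>R c) = - t * D (p + \<theta> *\<^sub>R c)"
      by fastforce
    then show ?thesis by (intro exI[of _ \<theta>]) (auto simp: algebra_simps)
  qed
qed

text \<open>One mean value step per coordinate axis in B; every point visited lies within
  l1-distance \<open>\<Sum>b\<in>Basis. \<bar>h \<bullet> b\<bar>\<close> of x, which is why that bound suffices.\<close>
lemma increment_along_coordinates:
  fixes f :: "'a::euclidean_space \<Rightarrow> real"
  assumes D: "\<And>b y. b \<in> Basis \<Longrightarrow> ((\<lambda>s. f (y + s *\<^sub>R b)) has_real_derivative D b y) (at 0)"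
    and close: "\<And>b y. b \<in> Basis \<Longrightarrow> dist y x < r \<Longrightarrow> \<bar>D b y - D b x\<bar> \<le> e"
    and h: "(\<Sum>b\<in>Basis. \<bar>h \<bullet> b\<bar>) < r"
    and B: "B \<subseteq> Basis"
  shows "\<bar>f (x + (\<Sum>b\<in>B. (h \<bullet> b) *\<^sub>R b)) - f x - (\<Sum>b\<in>B. (h \<bullet> b) * D b x)\<bar>
           \<le> e * (\<Sum>b\<in>B. \<bar>h \<bullet> b\<bar>)"
proof -
  have "finite B" using B finite_subset finite_Basis by blast
  from this B show ?thesis
  proof (induction B rule: finite_induct)
    case empty
    then show ?case by simp
  next
    case (insert c B)
    then have c: "c \<in> Basis" and BB: "B \<subseteq> Basis" by auto
    define p where "p = x + (\<Sum>b\<in>B. (h \<bullet> b) *\<^sub>R b)"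
    define t where "t = h \<bullet> c"
    obtain \<theta> where \<theta>: "\<bar>\<theta>\<bar> \<le> \<bar>t\<bar>" and mvt: "f (p + t *\<^sub>R c) - f p = t * D c (p + \<theta> *\<^sub>R c)"
      using mean_value_along_line[OF D[OF c]] by blast
    have "dist (p + \<theta> *\<^sub>R c) x \<le> norm (\<Sum>b\<in>B. (h \<bullet> b) *\<^sub>R b) + \<bar>\<theta>\<bar>"
      using norm_triangle_ineq[of "\<Sum>b\<in>B. (h \<bullet> b) *\<^sub>R b" "\<theta> *\<^sub>R c"] c
      by (simp add: p_def dist_norm)
    also have "\<dots> \<le> (\<Sum>b\<in>insert c B. \<bar>h \<bullet> b\<bar>)"
      using norm_sum[of "\<lambda>b. (h \<bullet> b) *\<^sub>R b" B] \<theta> insert.hyps BB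
      by (simp add: t_def subset_iff)
    also have "\<dots> \<le> (\<Sum>b\<in>Basis. \<bar>h \<bullet> b\<bar>)"
      using insert.prems by (intro sum_mono2) auto
    finally have near: "\<bar>D c (p + \<theta> *\<^sub>R c) - D c x\<bar> \<le> e"
      using close[OF c] h by simp
    have step: "\<bar>t * (D c (p + \<theta> *\<^sub>R c) - D c x)\<bar> \<le> e * \<bar>t\<bar>"
      using mult_left_mono[OF near abs_ge_zero[of t]] by (simp add: abs_mult mult.commute)
    have "f (x + (\<Sum>b\<in>insert c B. (h \<bullet> b) *\<^sub>R b)) - f x - (\<Sum>b\<in>insert c B. (h \<bullet> b) * D b x)
        = (f p - f x - (\<Sum>b\<in>B. (h \<bullet> b) * D b x)) + t * (D c (p + \<theta> *\<^sub>R c) - D c x)"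
      using insert.hyps mvt by (simp add: p_def t_def algebra_simps)
    then show ?case
      using insert.IH[OF BB] step insert.hyps by (simp add: p_def t_def algebra_simps)
  qed
qed

lemma l1_le_norm: "(\<Sum>b\<in>Basis. \<bar>h \<bullet> b\<bar>) \<le> real DIM('a) * norm (h::'a::euclidean_space)"
proof -
  have "(\<Sum>b\<in>Basis. \<bar>h \<bullet> b\<bar>) \<le> (\<Sum>b\<in>(Basis::'a set). norm h)"
    by (intro sum_mono Basis_le_norm)
  then show ?thesis by simp
qed

lemma has_derivative_continuous_partials:
  fixes f :: "'a::euclidean_space \<Rightarrow> real"
  assumes D: "\<And>b y. b \<in> Basis \<Longrightarrow> ((\<lambda>s. f (y + s *\<^sub>R b)) has_real_derivative D b y) (at 0)"
    and cont: "\<And>b. b \<in> Basis \<Longrightarrow> isCont (D b) x"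
  shows "(f has_derivative (\<lambda>h. \<Sum>b\<in>Basis. (h \<bullet> b) * D b x)) (at x)"
  unfolding has_derivative_at_alt
proof (intro conjI allI impI)
  show "bounded_linear (\<lambda>h. \<Sum>b\<in>Basis. (h \<bullet> b) * D b x)"
    by (intro bounded_linear_sum bounded_linear_mult_const bounded_linear_inner_left)
  fix e :: real
  assume "e > 0"
  define e' where "e' = e / DIM('a)"
  have "e' > 0" using \<open>e > 0\<close> by (simp add: e'_def)
  have "\<forall>\<^sub>F y in nhds x. \<forall>b\<in>Basis. dist (D b y) (D b x) < e'"
    using cont \<open>e' > 0\<close>
    by (intro eventually_ball_finite finite_Basis ballI tendstoD)
       (auto simp: isCont_def tendsto_at_iff_tendsto_nhds)
  then obtain r where "r > 0" and r: "\<And>b y. b \<in> Basis \<Longrightarrow> dist y x < r \<Longrightarrow> \<bar>D b y - D b x\<bar> \<le> e'"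
    unfolding eventually_nhds_metric by (force simp: dist_real_def)
  show "\<exists>d>0. \<forall>y. norm (y - x) < d \<longrightarrow>
          norm (f y - f x - (\<Sum>b\<in>Basis. ((y - x) \<bullet> b) * D b x)) \<le> e * norm (y - x)"
  proof (intro exI[of _ "r / DIM('a)"] conjI allI impI)
    show "r / DIM('a) > 0" using \<open>r > 0\<close> by simp
    fix y
    assume "norm (y - x) < r / DIM('a)"
    then have "(\<Sum>b\<in>Basis. \<bar>(y - x) \<bullet> b\<bar>) < r"
      using l1_le_norm[of "y - x"] by (simp add: field_simps)
    from increment_along_coordinates[OF D r this order_refl]
    have "\<bar>f y - f x - (\<Sum>b\<in>Basis. ((y - x) \<bullet> b) * D b x)\<bar> \<le> e' * (\<Sum>b\<in>Basis. \<bar>(y - x) \<bullet> b\<bar>)"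
      by (simp add: euclidean_representation)
    also have "\<dots> \<le> e * norm (y - x)"
      using mult_left_mono[OF l1_le_norm[of "y - x"], of e'] \<open>e' > 0\<close> by (simp add: e'_def)
    finally show "norm (f y - f x - (\<Sum>b\<in>Basis. ((y - x) \<bullet> b) * D b x)) \<le> e * norm (y - x)"
      by simp
  qed
qed

lemma C1_on_has_real_derivative:
  fixes f :: "'a::euclidean_space \<Rightarrow> real"
  assumes "C1_on S f" "b \<in> Basis" "x \<in> S"
  shows "((\<lambda>s. f (x + s *\<^sub>R b)) has_real_derivative pd f b x) (at 0)"
  using assms unfolding C1_on_def pd_def has_real_derivative_iff_has_vector_derivative
  by (simp add: vector_derivative_works[symmetric])

definition grad :: "('a::euclidean_space \<Rightarrow> real) \<Rightarrow> 'a \<Rightarrow> 'a" where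
  "grad f x = (\<Sum>b\<in>Basis. pd f b x *\<^sub>R b)"

lemma inner_grad: "h \<bullet> grad f x = (\<Sum>b\<in>Basis. (h \<bullet> b) * pd f b x)"
  by (simp add: grad_def inner_sum_right mult.commute)

lemma C1_on_UNIV_GDERIV:
  fixes f :: "'a::euclidean_space \<Rightarrow> real"
  assumes "C1_on UNIV f"
  shows "GDERIV f x :> grad f x"
proof -
  have "(f has_derivative (\<lambda>h. \<Sum>b\<in>Basis. (h \<bullet> b) * pd f b x)) (at x)"
    by (intro has_derivative_continuous_partials C1_on_has_real_derivative[OF assms])
       (use assms in \<open>auto simp: C1_on_def continuous_on_eq_continuous_at\<close>)
  then show ?thesis by (simp add: gderiv_def inner_grad)
qed

lemma C1_on_UNIV_continuous_on:
  fixes f :: "'a::euclidean_space \<Rightarrow> real"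
  assumes "C1_on UNIV f"
  shows "continuous_on UNIV f"
  using C1_on_UNIV_GDERIV[OF assms] unfolding gderiv_def
  by (meson continuous_at_imp_continuous_on has_derivative_continuous)

lemma GDERIV_along_line:
  assumes "GDERIV f (x + s *\<^sub>R d) :> g"
  shows "((\<lambda>s. f (x + s *\<^sub>R d)) has_real_derivative d \<bullet> g) (at s)"
proof -
  have "((\<lambda>s. x + s *\<^sub>R d) has_derivative (\<lambda>u. u *\<^sub>R d)) (at s)"
    by (auto intro!: derivative_eq_intros)
  from diff_chain_at[OF this assms[unfolded gderiv_def]]
  show ?thesis
    by (simp add: has_field_derivative_def o_def mult.commute[of _ "d \<bullet> g"])
qed

lemma taylor_lower_bound_unit_interval:
  fixes g g' g'' :: "real \<Rightarrow> real"
  assumes g: "\<And>s. (g has_real_derivative g' s) (at s)"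
    and g': "\<And>s. (g' has_real_derivative g'' s) (at s)"
    and g'': "\<And>s. g'' s \<ge> c"
  shows "g 1 \<ge> g 0 + g' 0 + c / 2"
proof -
  define h where "h s = g s - c * s\<^sup>2 / 2" for s
  define h' where "h' s = g' s - c * s" for s
  have "(h has_real_derivative h' s) (at s)" for s
    unfolding h_def h'_def by (auto intro!: derivative_eq_intros g)
  then obtain z where z: "0 < z" "z < 1" "h 1 - h 0 = h' z"
    using MVT2[of 0 1 h h'] by auto
  have "(h' has_real_derivative (g'' s - c)) (at s)" for s
    unfolding h'_def by (auto intro!: derivative_eq_intros g')
  then obtain w where w: "h' z - h' 0 = z * (g'' w - c)"
    using MVT2[OF z(1), of h' "\<lambda>s. g'' s - c"] by auto
  have "z * (g'' w - c) \<ge> 0" using z(1) g''[of w] by simp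
  then have "h' z \<ge> h' 0" using w by simp
  then show ?thesis using z(3) by (simp add: h_def h'_def)
qed

lemma strongly_convex_lower_bound:
  fixes \<rho> :: "'a::euclidean_space \<Rightarrow> real"
  assumes C2: "C2_on UNIV \<rho>"
    and hessian: "\<And>z t. (\<Sum>b\<in>Basis. \<Sum>c\<in>Basis. pd (pd \<rho> b) c z * (t \<bullet> b) * (t \<bullet> c))
                        \<ge> \<epsilon> * (norm t)\<^sup>2"
  shows "\<rho> (x + d) \<ge> \<rho> x + d \<bullet> grad \<rho> x + \<epsilon> * (norm d)\<^sup>2 / 2"
proof -
  have C1: "C1_on UNIV \<rho>" and C1_pd: "\<And>b. b \<in> Basis \<Longrightarrow> C1_on UNIV (pd \<rho> b)"
    using C2 by (auto simp: C2_on_def)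
  define g' where "g' s = (\<Sum>b\<in>Basis. (d \<bullet> b) * pd \<rho> b (x + s *\<^sub>R d))" for s
  define g'' where "g'' s = (\<Sum>b\<in>Basis. (d \<bullet> b) * (d \<bullet> grad (pd \<rho> b) (x + s *\<^sub>R d)))" for s
  have "((\<lambda>s. \<rho> (x + s *\<^sub>R d)) has_real_derivative g' s) (at s)" for s
    using GDERIV_along_line[OF C1_on_UNIV_GDERIV[OF C1]] by (simp add: g'_def inner_grad)
  moreover have "(g' has_real_derivative g'' s) (at s)" for s
    unfolding g'_def g''_def
    by (intro DERIV_sum DERIV_cmult GDERIV_along_line C1_on_UNIV_GDERIV C1_pd)
  moreover have "g'' s \<ge> \<epsilon> * (norm d)\<^sup>2" for s
    using hessian[where z = "x + s *\<^sub>R d" and t = d]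
    by (simp add: g''_def inner_grad sum_distrib_left algebra_simps)
  ultimately have "\<rho> (x + 1 *\<^sub>R d) \<ge> \<rho> (x + 0 *\<^sub>R d) + g' 0 + \<epsilon> * (norm d)\<^sup>2 / 2"
    by (rule taylor_lower_bound_unit_interval)
  then show ?thesis by (simp add: g'_def inner_grad)
qed

lemma bounded_sublevel_of_quadratic_growth:
  fixes \<rho> :: "'a::real_inner \<Rightarrow> real"
  assumes "\<epsilon> > 0" and growth: "\<And>z. \<rho> z \<ge> a + z \<bullet> g + \<epsilon> * (norm z)\<^sup>2 / 2"
  shows "bounded {z. \<rho> z < c}"
  unfolding bounded_iff
proof (intro exI ballI)
  define K where "K = \<bar>c - a\<bar> + norm g"
  fix z assume "z \<in> {z. \<rho> z < c}"
  then have quad: "\<epsilon> * (norm z * norm z) < 2 * \<bar>c - a\<bar> + 2 * (norm z * norm g)"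
    using growth[of z] abs_le_D2[OF Cauchy_Schwarz_ineq2[of z g]] abs_ge_self[of "c - a"]
    by (simp add: power2_eq_square)
  have "norm z < 2 * K / \<epsilon>" if "norm z > 1"
  proof -
    have "\<bar>c - a\<bar> \<le> \<bar>c - a\<bar> * norm z"
      using mult_left_mono[of 1 "norm z" "\<bar>c - a\<bar>"] that by simp
    then have "(\<epsilon> * norm z) * norm z < (2 * K) * norm z"
      using quad by (simp add: K_def algebra_simps)
    then have "\<epsilon> * norm z < 2 * K"
      using that by (simp add: mult_less_cancel_right)
    then show ?thesis
      using \<open>\<epsilon> > 0\<close> by (simp add: pos_less_divide_eq mult.commute)
  qed
  then show "norm z \<le> max 1 (2 * K / \<epsilon>)"
    by fastforce
qed

lemma C1_on_grad:
  fixes f :: "'a::euclidean_space \<Rightarrow> real"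
  assumes "C2_on S f"
  shows "C1_on S (grad f)"
proof -
  have C1_pd: "\<And>b. b \<in> Basis \<Longrightarrow> C1_on S (pd f b)"
    using assms by (auto simp: C2_on_def)
  define H where "H c x = (\<Sum>b\<in>Basis. pd (pd f b) c x *\<^sub>R b)" for c x
  have line: "((\<lambda>s. grad f (x + s *\<^sub>R c)) has_vector_derivative H c x) (at 0)"
    if "c \<in> Basis" "x \<in> S" for c x
  proof -
    have "((\<lambda>s. \<Sum>b\<in>Basis. pd f b (x + s *\<^sub>R c) *\<^sub>R b) has_vector_derivative
            (\<Sum>b\<in>Basis. pd f b (x + 0 *\<^sub>R c) *\<^sub>R 0 + pd (pd f b) c x *\<^sub>R b)) (at 0)"
      by (intro has_vector_derivative_sum has_vector_derivative_scaleR
          has_vector_derivative_const C1_on_has_real_derivative[OF C1_pd]) (use that in auto)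
    then show ?thesis by (simp add: grad_def H_def)
  qed
  show ?thesis
    unfolding C1_on_def
  proof (intro ballI conjI)
    fix c :: 'a and x assume "c \<in> Basis" "x \<in> S"
    then show "(\<lambda>s. grad f (x + s *\<^sub>R c)) differentiable at 0"
      using line differentiableI_vector by blast
  next
    fix c :: 'a assume c: "c \<in> Basis"
    have "continuous_on S (H c)"
      unfolding H_def using C1_pd c
      by (intro continuous_on_sum continuous_on_scaleR continuous_on_const) (auto simp: C1_on_def)
    moreover have "\<And>x. x \<in> S \<Longrightarrow> pd (grad f) c x = H c x"
      unfolding pd_def using line[OF c] by (rule vector_derivative_at)
    ultimately show "continuous_on S (pd (grad f) c)"
      using continuous_on_cong by blast
  qed
qed

lemma C1_on_fst:
  fixes f :: "'a::euclidean_space \<Rightarrow> 'c::real_normed_vector"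
  assumes f: "C1_on S f"
  shows "C1_on (S \<times> (T :: 'b::euclidean_space set)) (\<lambda>p. f (fst p))"
  unfolding C1_on_def
proof (intro ballI)
  fix b :: "'a \<times> 'b" assume "b \<in> Basis"
  then consider c where "c \<in> Basis" "b = (c, 0)" | c where "c \<in> Basis" "b = (0, c)"
    by (auto simp: Basis_prod_def)
  then show "(\<forall>x\<in>S \<times> T. (\<lambda>s. f (fst (x + s *\<^sub>R b))) differentiable at 0)
           \<and> continuous_on (S \<times> T) (pd (\<lambda>p. f (fst p)) b)"
  proof cases
    case (1 c)
    have "pd (\<lambda>p. f (fst p)) b = (\<lambda>p. pd f c (fst p))"
      by (simp add: fun_eq_iff pd_def 1)
    moreover have "continuous_on (S \<times> T) (\<lambda>p. pd f c (fst p))"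
    proof (rule continuous_on_compose2[of S "pd f c"])
      show "continuous_on S (pd f c)" using f 1 by (simp add: C1_on_def)
    qed (auto intro: continuous_on_fst continuous_on_id)
    moreover have "(\<lambda>s. f (fst (x + s *\<^sub>R b))) differentiable at 0" if "x \<in> S \<times> T" for x
      using f 1 that by (auto simp: C1_on_def)
    ultimately show ?thesis by simp
  next
    case (2 c)
    then show ?thesis by (simp add: pd_def)
  qed
qed

lemma qinner_real_part: "qinner v w $ 1 = v \<bullet> w"
  by (simp add: qinner_def sum_component inner_vec_def qmult_def qconj_def vector_def sum_4)

lemma vrho_eq_grad: "vrho \<rho> = grad \<rho>"
proof
  fix z
  have "pd \<rho> b z = vrho \<rho> z \<bullet> b" if b: "b \<in> Basis" for b
  proof -
    obtain l m where "b = qe l m"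
      using b by (force simp: Basis_vec_def qe_def)
    moreover have "vrho \<rho> z \<bullet> qe l m = vrho \<rho> z $ l $ m"
      by (simp add: qe_def inner_axis)
    moreover have "vrho \<rho> z $ l $ m = pd \<rho> (qe l m) z"
      by (simp add: vrho_def qS_def axis_def if_distrib sum.delta cong: if_cong)
    ultimately show ?thesis by simp
  qed
  then show "vrho \<rho> z = grad \<rho> z"
    unfolding grad_def by (subst eq_commute, subst euclidean_representation_sum) simp
qed

lemma qinner_vrho_nonzero:
  assumes supporting: "\<And>x d. \<rho> x + d \<bullet> grad \<rho> x \<le> \<rho> (x + d)"
    and "\<rho> z < 0" "0 \<le> \<rho> \<zeta>"
  shows "qinner (vrho \<rho> \<zeta>) (\<zeta> - z) \<noteq> 0"
proof -
  have "qinner (vrho \<rho> \<zeta>) (\<zeta> - z) $ 1 = - ((z - \<zeta>) \<bullet> grad \<rho> \<zeta>)"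
    by (simp add: qinner_real_part vrho_eq_grad inner_commute[of "grad \<rho> \<zeta>"] inner_diff_left)
  moreover have "\<rho> \<zeta> + (z - \<zeta>) \<bullet> grad \<rho> \<zeta> \<le> \<rho> z"
    using supporting[of \<zeta> "z - \<zeta>"] by simp
  ultimately have "qinner (vrho \<rho> \<zeta>) (\<zeta> - z) $ 1 > 0"
    using assms(2,3) by linarith
  then show ?thesis by auto
qed

theorem lemma3p9:
  fixes \<rho> :: "real^4^'n \<Rightarrow> real" and \<epsilon>\<^sub>0 :: real
  assumes C2: "C2_on UNIV \<rho>"
    and eps_pos: "\<epsilon>\<^sub>0 > 0"
    and convex: "\<And>z t. (\<Sum>b\<in>Basis. \<Sum>c\<in>Basis. pd (pd \<rho> b) c z * (t \<bullet> b) * (t \<bullet> c))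
                        \<ge> \<epsilon>\<^sub>0 * (norm t)\<^sup>2"
  shows "C1_on UNIV (vrho \<rho>)
    \<and> qbd_map {z. \<rho> z < 0} (\<lambda>(\<zeta>, z). vrho \<rho> \<zeta>)
    \<and> (\<forall>\<zeta>\<in>frontier {z. \<rho> z < 0}. \<forall>z\<in>{z. \<rho> z < 0}. qinner (vrho \<rho> \<zeta>) (\<zeta> - z) \<noteq> 0)"
proof -
  define U where "U = {z. \<rho> z < 0}"
  have lower: "\<rho> x + d \<bullet> grad \<rho> x + \<epsilon>\<^sub>0 * (norm d)\<^sup>2 / 2 \<le> \<rho> (x + d)" for x d
    by (rule strongly_convex_lower_bound[OF C2 convex])
  have supporting: "\<rho> x + d \<bullet> grad \<rho> x \<le> \<rho> (x + d)" for x d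
  proof -
    have "0 \<le> \<epsilon>\<^sub>0 * (norm d)\<^sup>2 / 2" using eps_pos by simp
    with lower[of x d] show ?thesis by linarith
  qed
  have "open U"
    using C2 unfolding U_def C2_on_def
    by (intro open_Collect_less continuous_on_const C1_on_UNIV_continuous_on) simp
  have "bounded U"
    unfolding U_def using eps_pos lower[of 0]
    by (intro bounded_sublevel_of_quadratic_growth) auto
  have separates: "qinner (vrho \<rho> \<zeta>) (\<zeta> - z) \<noteq> 0" if "\<zeta> \<in> frontier U" "z \<in> U" for \<zeta> z
    using that \<open>open U\<close> frontier_disjoint_eq[of U]
    by (intro qinner_vrho_nonzero[OF supporting]) (auto simp: U_def)
  have C1: "C1_on UNIV (vrho \<rho>)"
    using C1_on_grad[OF C2] by (simp add: vrho_eq_grad)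
  then have "C1_on (UNIV \<times> U) (\<lambda>(\<zeta>, z). vrho \<rho> \<zeta>)"
    using C1_on_fst by (simp add: case_prod_unfold)
  then have "qbd_map U (\<lambda>(\<zeta>, z). vrho \<rho> \<zeta>)"
    unfolding qbd_map_def
    by (intro conjI exI[of _ UNIV] ballI) (simp_all add: \<open>open U\<close> \<open>bounded U\<close> separates)
  then show ?thesis
    using C1 separates unfolding U_def by blast
qed

end
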